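(* Consider the system \[ \begin{aligned} \dot X_1^1&=\bigl(\mu_1(S_1^{in}-k_1X_1^1)-D_1\bigr)X_1^1,\\ \dot X_2^1&=\bigl(\mu_2(S_2^{in}+k_2X_1^1-k_3X_2^1)-D_1\bigr)X_2^1,\\ \dot X_1^2&=D_2(X_1^1-X_1^2)+\mu_1(S_1^{in}-k_1X_1^2)X_1^2,\\ \dot X_2^2&=D_2(X_2^1-X_2^2)+\mu_2(S_2^{in}+k_2X_1^2-k_3X_2^2)X_2^2, \end{aligned} \] on $M=\{(X_1^1,X_2^1,X_1^2,X_2^2)\in\mathbb R_+^4: X_1^i\le S_1^{in}/k_1,\ X_2^i\le (S_2^{in}+k_2X_1^i)/k_3,\ i=1,2\}$, where $\mu_1,\mu_2$ satisfy (H1) and (H2). Then its nonnegative steady states are of the following nine types, with the indicated components (for $i=1,2$), and a steady state of each type exists (with nonnegative components) if and only if the indicated condition holds: \begin{itemize} \item $\mathcal E_{00}^{00}=(0,0,0,0)$: always exists. \item $\mathcal E_{00}^{0i}=\bigl(0,0,0,(S_2^{in}-\lambda_2^{2i})/k_3\bigr)$: exists iff $S_2^{in}>\lambda_2^{2i}$. \item $\mathcal E_{00}^{10}=\bigl(0,0,(S_1^{in}-\lambda_1^2)/k_1,0\bigr)$: exists iff $S_1^{in}>\lambda_1^2$. \item $\mathcal E_{00}^{1i}=\bigl(0,0,(S_1^{in}-\lambda_1^2)/k_1,\ k_2(S_1^{in}-F_{2i})/(k_1k_3)\bigr)$: exists iff $S_1^{in}>\max(\lambda_1^2,F_{2i})$.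 \item $\mathcal E_{10}^{10}=\bigl((S_1^{in}-\lambda_1^1)/k_1,0,X_1^{2*},0\bigr)$, where $X_1^{2*}$ is the unique solution of $f_1(x)=g_1(x)$ (with $X_1^{1*}=(S_1^{in}-\lambda_1^1)/k_1$): exists iff $S_1^{in}>\lambda_1^1$. \item $\mathcal E_{10}^{1i}=\bigl((S_1^{in}-\lambda_1^1)/k_1,0,X_1^{2*},\phi_i/k_3\bigr)$, with $X_1^{2*}$ as in the previous item: exists iff $S_1^{in}>\lambda_1^1$ and $\phi_i>0$. \item $\mathcal E_{0i}^{01}=\bigl(0,(S_2^{in}-\lambda_2^{1i})/k_3,0,X_2^{2*}\bigr)$, where $X_2^{2*}$ is a solution of $f_2(x)=g_2(x)$ with $X_2^{1*}=(S_2^{in}-\lambda_2^{1i})/k_3$: exists iff $S_2^{in}>\lambda_2^{1i}$. \item $\mathcal E_{0i}^{11}=\bigl(0,(S_2^{in}-\lambda_2^{1i})/k_3,(S_1^{in}-\lambda_1^2)/k_1,X_2^{2*}\bigr)$, where $X_2^{2*}$ is a solution of $f_3(x)=g_2(x)$ with $X_2^{1*}=(S_2^{in}-\lambda_2^{1i})/k_3$ and $X_1^{2*}=(S_1^{in}-\lambda_1^2)/k_1$: exists iff $S_1^{in}>\lambda_1^2$ and $S_2^{in}>\lambda_2^{1i}$. \item $\mathcal E_{1i}^{11}=\bigl((S_1^{in}-\lambda_1^1)/k_1,\ k_2(S_1^{in}-F_{1i})/(k_1k_3),\ X_1^{2*},X_2^{2*}\bigr)$, where $X_1^{2*}$ is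 the unique solution of $f_1(x)=g_1(x)$ (with $X_1^{1*}=(S_1^{in}-\lambda_1^1)/k_1$) and $X_2^{2*}$ is a solution of $f_3(x)=g_2(x)$ (with $X_2^{1*}=k_2(S_1^{in}-F_{1i})/(k_1k_3)$): exists iff $S_1^{in}>\max(\lambda_1^1,F_{1i})$. \end{itemize}
   Context: Parameters: $k_1,k_2,k_3>0$ (pseudo-stoichiometric coefficients), $D>0$, $r\in(0,1)$, $r_1=r$, $r_2=1-r$, $D_1=D/r_1$, $D_2=D/r_2$, $S_1^{in},S_2^{in}\ge0$. The functions $\mu_1,\mu_2\in C^1(\mathbb R_+)$ satisfy (H1): $\mu_1(0)=0$, $\lim_{s\to\infty}\mu_1(s)=m_1$, $\mu_1'(s)>0$ for all $s>0$; and (H2): $\mu_2(0)=0$, $\lim_{s\to\infty}\mu_2(s)=0$, and there is $S_2^m>0$ with $\mu_2'>0$ on $(0,S_2^m)$ and $\mu_2'<0$ on $(S_2^m,\infty)$. Let $D_i^m=r_i\mu_2(S_2^m)$. For $i=1,2$: $\lambda_1^i=\lambda_1^i(D,r)$ is the unique solution of $\mu_1(S)=D_i$ when $D<r_im_1$, and $\lambda_1^i=+\infty$ otherwise; $\lambda_2^{i1}\le\lambda_2^{i2}$ are the solutions of $\mu_2(S)=D_i$ when $D\le D_i^m$, and $\lambda_2^{ij}=+\infty$ otherwise. $F_{ij}=\lambda_1^i+\frac{k_1}{k_2}(\lambda_2^{ij}-S_2^{in})$. $\phi_j=S_2^{in}+k_2X_1^{2*}-\lambda_2^{2j}$, where $X_1^{2*}$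 is the unique solution of $f_1(x)=g_1(x)$ with $X_1^{1*}=(S_1^{in}-\lambda_1^1)/k_1$ (defined for $0<D\le D_2^m$, $S_1^{in}>\lambda_1^1$). Auxiliary functions (where $X_1^{1*},X_2^{1*},X_1^{2*}$ denote the indicated components of the steady state under consideration): $g_1(x)=D_2(x-X_1^{1*})/x$, $g_2(x)=D_2(x-X_2^{1*})/x$ on $(0,\infty)$; $f_1(x)=\mu_1(S_1^{in}-k_1x)$ on $[0,S_1^{in}/k_1]$; $f_2(x)=\mu_2(S_2^{in}-k_3x)$ on $[0,S_2^{in}/k_3]$; $f_3(x)=\mu_2(S_2^{in}+k_2X_1^{2*}-k_3x)$ on $[0,(S_2^{in}+k_2X_1^{2*})/k_3]$. Notation $\mathcal E_{ab}^{cd}$: the subscript refers to $(X_1^1,X_2^1)$ and the superscript to $(X_1^2,X_2^2)$; $0$ means the component vanishes, a nonzero index means it is positive (the index $i\in\{1,2\}$ distinguishing the two possible branches). *)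

theory Defs
  imports Complex_Main "HOL-Library.Extended_Real"
begin

text \<open>The possibly infinite
  quantities lambda, F, phi are extended reals; lambda = \<infinity> encodes "no solution".\<close>

definition rr :: "real \<Rightarrow> nat \<Rightarrow> real" where
  "rr r i = (if i = 1 then r else 1 - r)"

definition Dd :: "real \<Rightarrow> real \<Rightarrow> nat \<Rightarrow> real" where
  "Dd D r i = D / rr r i"

definition lam1 :: "(real \<Rightarrow> real) \<Rightarrow> real \<Rightarrow> real \<Rightarrow> real \<Rightarrow> nat \<Rightarrow> ereal" where
  "lam1 mu1 m1 D r i =
     (if D < rr r i * m1 then ereal (THE s. 0 \<le> s \<and> mu1 s = Dd D r i) else \<infinity>)"

text \<open>lam2 ... i 1 = lambda_2^{i1} (the smaller root), lam2 ... i 2 = lambda_2^{i2}.\<close>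
definition lam2 :: "(real \<Rightarrow> real) \<Rightarrow> real \<Rightarrow> real \<Rightarrow> real \<Rightarrow> nat \<Rightarrow> nat \<Rightarrow> ereal" where
  "lam2 mu2 S2m D r i j =
     (if D \<le> rr r i * mu2 S2m
      then ereal (if j = 1 then (THE s. 0 \<le> s \<and> s \<le> S2m \<and> mu2 s = Dd D r i)
                  else (THE s. S2m \<le> s \<and> mu2 s = Dd D r i))
      else \<infinity>)"

definition FF :: "real \<Rightarrow> real \<Rightarrow> real \<Rightarrow> real \<Rightarrow> real \<Rightarrow> (real \<Rightarrow> real) \<Rightarrow> (real \<Rightarrow> real)
    \<Rightarrow> real \<Rightarrow> real \<Rightarrow> nat \<Rightarrow> nat \<Rightarrow> ereal" where
  "FF k1 k2 D r S2in mu1 mu2 m1 S2m i j =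
     lam1 mu1 m1 D r i + ereal (k1 / k2) * (lam2 mu2 S2m D r i j - ereal S2in)"

definition X11s :: "real \<Rightarrow> real \<Rightarrow> real \<Rightarrow> real \<Rightarrow> (real \<Rightarrow> real) \<Rightarrow> real \<Rightarrow> real" where
  "X11s k1 D r S1in mu1 m1 = (S1in - real_of_ereal (lam1 mu1 m1 D r 1)) / k1"

text \<open>X_1^{2*}: the unique solution of f1(x) = g1(x), x in (0, S1in/k1]
  (domain of g1 is (0,\<infinity>), of f1 is [0,S1in/k1]).\<close>
definition X12s :: "real \<Rightarrow> real \<Rightarrow> real \<Rightarrow> real \<Rightarrow> (real \<Rightarrow> real) \<Rightarrow> real \<Rightarrow> real" where
  "X12s k1 D r S1in mu1 m1 =
     (THE x. 0 < x \<and> x \<le> S1in / k1 \<and>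
        mu1 (S1in - k1 * x) = Dd D r 2 * (x - X11s k1 D r S1in mu1 m1) / x)"

definition phi :: "real \<Rightarrow> real \<Rightarrow> real \<Rightarrow> real \<Rightarrow> real \<Rightarrow> real \<Rightarrow> (real \<Rightarrow> real)
    \<Rightarrow> (real \<Rightarrow> real) \<Rightarrow> real \<Rightarrow> real \<Rightarrow> nat \<Rightarrow> ereal" where
  "phi k1 k2 D r S1in S2in mu1 mu2 m1 S2m j =
     ereal (S2in + k2 * X12s k1 D r S1in mu1 m1) - lam2 mu2 S2m D r 2 j"

text \<open>The invariant set M; a state is (X_1^1, X_2^1, X_1^2, X_2^2) = (a, b, c, d).\<close>
definition inM :: "real \<Rightarrow> real \<Rightarrow> real \<Rightarrow> real \<Rightarrow> real
    \<Rightarrow> real \<Rightarrow> real \<Rightarrow> real \<Rightarrow> real \<Rightarrow> bool" where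
  "inM k1 k2 k3 S1in S2in a b c d \<longleftrightarrow>
     0 \<le> a \<and> 0 \<le> b \<and> 0 \<le> c \<and> 0 \<le> d \<and>
     a \<le> S1in / k1 \<and> c \<le> S1in / k1 \<and>
     b \<le> (S2in + k2 * a) / k3 \<and> d \<le> (S2in + k2 * c) / k3"

definition steady :: "real \<Rightarrow> real \<Rightarrow> real \<Rightarrow> real \<Rightarrow> real \<Rightarrow> real \<Rightarrow> real
    \<Rightarrow> (real \<Rightarrow> real) \<Rightarrow> (real \<Rightarrow> real) \<Rightarrow> real \<Rightarrow> real \<Rightarrow> real \<Rightarrow> real \<Rightarrow> bool" where
  "steady k1 k2 k3 D r S1in S2in mu1 mu2 a b c d \<longleftrightarrow>
     inM k1 k2 k3 S1in S2in a b c d \<and>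
     (mu1 (S1in - k1 * a) - Dd D r 1) * a = 0 \<and>
     (mu2 (S2in + k2 * a - k3 * b) - Dd D r 1) * b = 0 \<and>
     Dd D r 2 * (a - c) + mu1 (S1in - k1 * c) * c = 0 \<and>
     Dd D r 2 * (b - d) + mu2 (S2in + k2 * c - k3 * d) * d = 0"

datatype sstype =
    E00_00 | E00_0i nat | E00_10 | E00_1i nat | E10_10 | E10_1i nat
  | E0i_01 nat | E0i_11 nat | E1i_11 nat

definition all_types :: "sstype set" where
  "all_types = {E00_00, E00_10, E10_10} \<union>
     (\<Union>i\<in>{1::nat,2}. {E00_0i i, E00_1i i, E10_1i i, E0i_01 i, E0i_11 i, E1i_11 i})"

fun is_type :: "real \<Rightarrow> real \<Rightarrow> real \<Rightarrow> real \<Rightarrow> real \<Rightarrow> real \<Rightarrow> real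
    \<Rightarrow> (real \<Rightarrow> real) \<Rightarrow> (real \<Rightarrow> real) \<Rightarrow> real \<Rightarrow> real
    \<Rightarrow> sstype \<Rightarrow> real \<Rightarrow> real \<Rightarrow> real \<Rightarrow> real \<Rightarrow> bool" where
  "is_type k1 k2 k3 D r S1in S2in mu1 mu2 m1 S2m E00_00 a b c d \<longleftrightarrow>
     a = 0 \<and> b = 0 \<and> c = 0 \<and> d = 0"
| "is_type k1 k2 k3 D r S1in S2in mu1 mu2 m1 S2m (E00_0i i) a b c d \<longleftrightarrow>
     a = 0 \<and> b = 0 \<and> c = 0 \<and> d > 0 \<and>
     lam2 mu2 S2m D r 2 i \<noteq> \<infinity> \<and>
     d = (S2in - real_of_ereal (lam2 mu2 S2m D r 2 i)) / k3"
| "is_type k1 k2 k3 D r S1in S2in mu1 mu2 m1 S2m E00_10 a b c d \<longleftrightarrow>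
     a = 0 \<and> b = 0 \<and> c > 0 \<and> d = 0 \<and>
     lam1 mu1 m1 D r 2 \<noteq> \<infinity> \<and>
     c = (S1in - real_of_ereal (lam1 mu1 m1 D r 2)) / k1"
| "is_type k1 k2 k3 D r S1in S2in mu1 mu2 m1 S2m (E00_1i i) a b c d \<longleftrightarrow>
     a = 0 \<and> b = 0 \<and> c > 0 \<and> d > 0 \<and>
     lam1 mu1 m1 D r 2 \<noteq> \<infinity> \<and> FF k1 k2 D r S2in mu1 mu2 m1 S2m 2 i \<noteq> \<infinity> \<and>
     c = (S1in - real_of_ereal (lam1 mu1 m1 D r 2)) / k1 \<and>
     d = k2 * (S1in - real_of_ereal (FF k1 k2 D r S2in mu1 mu2 m1 S2m 2 i)) / (k1 * k3)"
| "is_type k1 k2 k3 D r S1in S2in mu1 mu2 m1 S2m E10_10 a b c d \<longleftrightarrow>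
     a > 0 \<and> b = 0 \<and> c > 0 \<and> d = 0 \<and>
     lam1 mu1 m1 D r 1 \<noteq> \<infinity> \<and>
     a = X11s k1 D r S1in mu1 m1 \<and> c = X12s k1 D r S1in mu1 m1"
| "is_type k1 k2 k3 D r S1in S2in mu1 mu2 m1 S2m (E10_1i i) a b c d \<longleftrightarrow>
     a > 0 \<and> b = 0 \<and> c > 0 \<and> d > 0 \<and>
     lam1 mu1 m1 D r 1 \<noteq> \<infinity> \<and> lam2 mu2 S2m D r 2 i \<noteq> \<infinity> \<and>
     a = X11s k1 D r S1in mu1 m1 \<and> c = X12s k1 D r S1in mu1 m1 \<and>
     d = real_of_ereal (phi k1 k2 D r S1in S2in mu1 mu2 m1 S2m i) / k3"
| "is_type k1 k2 k3 D r S1in S2in mu1 mu2 m1 S2m (E0i_01 i) a b c d \<longleftrightarrow>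
     a = 0 \<and> b > 0 \<and> c = 0 \<and> d > 0 \<and>
     lam2 mu2 S2m D r 1 i \<noteq> \<infinity> \<and>
     b = (S2in - real_of_ereal (lam2 mu2 S2m D r 1 i)) / k3 \<and>
     d \<le> S2in / k3 \<and> mu2 (S2in - k3 * d) = Dd D r 2 * (d - b) / d"
| "is_type k1 k2 k3 D r S1in S2in mu1 mu2 m1 S2m (E0i_11 i) a b c d \<longleftrightarrow>
     a = 0 \<and> b > 0 \<and> c > 0 \<and> d > 0 \<and>
     lam2 mu2 S2m D r 1 i \<noteq> \<infinity> \<and> lam1 mu1 m1 D r 2 \<noteq> \<infinity> \<and>
     b = (S2in - real_of_ereal (lam2 mu2 S2m D r 1 i)) / k3 \<and>
     c = (S1in - real_of_ereal (lam1 mu1 m1 D r 2)) / k1 \<and>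
     d \<le> (S2in + k2 * c) / k3 \<and> mu2 (S2in + k2 * c - k3 * d) = Dd D r 2 * (d - b) / d"
| "is_type k1 k2 k3 D r S1in S2in mu1 mu2 m1 S2m (E1i_11 i) a b c d \<longleftrightarrow>
     a > 0 \<and> b > 0 \<and> c > 0 \<and> d > 0 \<and>
     lam1 mu1 m1 D r 1 \<noteq> \<infinity> \<and> FF k1 k2 D r S2in mu1 mu2 m1 S2m 1 i \<noteq> \<infinity> \<and>
     a = X11s k1 D r S1in mu1 m1 \<and>
     b = k2 * (S1in - real_of_ereal (FF k1 k2 D r S2in mu1 mu2 m1 S2m 1 i)) / (k1 * k3) \<and>
     c = X12s k1 D r S1in mu1 m1 \<and>
     d \<le> (S2in + k2 * c) / k3 \<and> mu2 (S2in + k2 * c - k3 * d) = Dd D r 2 * (d - b) / d"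

fun exists_cond :: "real \<Rightarrow> real \<Rightarrow> real \<Rightarrow> real \<Rightarrow> real \<Rightarrow> real \<Rightarrow> real
    \<Rightarrow> (real \<Rightarrow> real) \<Rightarrow> (real \<Rightarrow> real) \<Rightarrow> real \<Rightarrow> real \<Rightarrow> sstype \<Rightarrow> bool" where
  "exists_cond k1 k2 k3 D r S1in S2in mu1 mu2 m1 S2m E00_00 \<longleftrightarrow> True"
| "exists_cond k1 k2 k3 D r S1in S2in mu1 mu2 m1 S2m (E00_0i i) \<longleftrightarrow>
     ereal S2in > lam2 mu2 S2m D r 2 i"
| "exists_cond k1 k2 k3 D r S1in S2in mu1 mu2 m1 S2m E00_10 \<longleftrightarrow>
     ereal S1in > lam1 mu1 m1 D r 2"
| "exists_cond k1 k2 k3 D r S1in S2in mu1 mu2 m1 S2m (E00_1i i) \<longleftrightarrow>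
     ereal S1in > max (lam1 mu1 m1 D r 2) (FF k1 k2 D r S2in mu1 mu2 m1 S2m 2 i)"
| "exists_cond k1 k2 k3 D r S1in S2in mu1 mu2 m1 S2m E10_10 \<longleftrightarrow>
     ereal S1in > lam1 mu1 m1 D r 1"
| "exists_cond k1 k2 k3 D r S1in S2in mu1 mu2 m1 S2m (E10_1i i) \<longleftrightarrow>
     ereal S1in > lam1 mu1 m1 D r 1 \<and> phi k1 k2 D r S1in S2in mu1 mu2 m1 S2m i > 0"
| "exists_cond k1 k2 k3 D r S1in S2in mu1 mu2 m1 S2m (E0i_01 i) \<longleftrightarrow>
     ereal S2in > lam2 mu2 S2m D r 1 i"
| "exists_cond k1 k2 k3 D r S1in S2in mu1 mu2 m1 S2m (E0i_11 i) \<longleftrightarrow>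
     ereal S1in > lam1 mu1 m1 D r 2 \<and> ereal S2in > lam2 mu2 S2m D r 1 i"
| "exists_cond k1 k2 k3 D r S1in S2in mu1 mu2 m1 S2m (E1i_11 i) \<longleftrightarrow>
     ereal S1in > max (lam1 mu1 m1 D r 1) (FF k1 k2 D r S2in mu1 mu2 m1 S2m 1 i)"

end

theory Submission
  imports Defs
begin

(* The first species (X_1^1, X_1^2) does not see the second one, so the steady-state equations
   are triangular. In the first tank a species is either absent or sits at its break-even
   concentration; in the second tank it is absent only if it is absent from the first tank, and
   otherwise the balance D_2 (X^1 - X^2) + mu X^2 = 0 reads f(X^2) = g(X^2) with g increasing.
   For the first species f_1 is decreasing, so X_1^{2*} is unique; for the second species a root
   of f_3 = g_2 still exists by the intermediate value theorem, as x f_3(x) - D_2 (x - X_2^1)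
   changes sign on [0, (S_2^in + k_2 X_1^2)/k_3]. The three first-species states combined with
   the three second-species alternatives give the nine types, and each existence condition says
   that the relevant break-even concentration lies below the available substrate. *)

lemma balance_eq_zero_iff:
  fixes K a c y :: real
  assumes "K > 0"
  shows "K * (a - c) + y * c = 0 \<longleftrightarrow> (c = 0 \<and> a = 0) \<or> (c \<noteq> 0 \<and> y = K * (c - a) / c)"
  using assms by (cases "c = 0") (auto simp: field_simps)

lemma dilution_term_strict_mono:
  fixes K a x y :: real
  assumes "K > 0" "a > 0" "0 < x" "x < y"
  shows "K * (x - a) / x < K * (y - a) / y"
proof -
  have "K * (a / y) < K * (a / x)" using assms by (simp add: frac_less2)
  moreover have "K * (x - a) / x = K - K * (a / x)" "K * (y - a) / y = K - K * (a / y)"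
    using assms by (simp_all add: field_simps)
  ultimately show ?thesis by simp
qed

lemma ex_root_against_dilution_term:
  fixes f :: "real \<Rightarrow> real"
  assumes "continuous_on {0..T} f" "f T = 0" "0 < b" "b < T" "K > 0"
  shows "\<exists>x. 0 < x \<and> x \<le> T \<and> f x = K * (x - b) / x"
proof -
  have "continuous_on {0..T} (\<lambda>x. x * f x - K * (x - b))"
    by (intro continuous_intros assms(1))
  then obtain x where x: "0 \<le> x" "x \<le> T" "x * f x - K * (x - b) = 0"
    using IVT2'[of "\<lambda>x. x * f x - K * (x - b)" T 0 0] assms by auto
  with assms have "x \<noteq> 0" by auto
  with x have "f x = K * (x - b) / x" by (simp add: field_simps)
  with x \<open>x \<noteq> 0\<close> show ?thesis by (intro exI[of _ x]) auto
qed

lemma ereal_less_if_real_of_ereal_less: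
  fixes x :: ereal
  assumes "x \<noteq> \<infinity>" "real_of_ereal x < s"
  shows "x < ereal s"
  using assms by (cases x) auto

locale growth_rate =
  fixes mu mu' :: "real \<Rightarrow> real"
  assumes has_deriv: "\<And>s. 0 \<le> s \<Longrightarrow> (mu has_real_derivative mu' s) (at s within {0..})"
    and at_zero: "mu 0 = 0"
begin

lemma continuous_on_nonneg: "continuous_on {0..} mu"
  unfolding continuous_on_eq_continuous_within using has_deriv DERIV_continuous by blast

lemma has_deriv_at: "0 < s \<Longrightarrow> (mu has_real_derivative mu' s) (at s)"
proof -
  assume "0 < s"
  then have "(mu has_real_derivative mu' s) (at s within {0<..})"
    by (intro has_field_derivative_subset[OF has_deriv]) auto
  moreover have "at s within {0<..} = at s"
    using \<open>0 < s\<close> by (intro at_within_open) auto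
  ultimately show ?thesis by simp
qed

lemma less_if_deriv_pos:
  assumes "0 \<le> x" "x < y" "\<And>s. x < s \<Longrightarrow> s < y \<Longrightarrow> mu' s > 0"
  shows "mu x < mu y"
proof (rule DERIV_pos_imp_increasing_open[OF assms(2)])
  show "\<exists>z. DERIV mu s :> z \<and> z > 0" if "x < s" "s < y" for s
    using that assms has_deriv_at[of s] by auto
  show "continuous_on {x..y} mu"
    by (rule continuous_on_subset[OF continuous_on_nonneg]) (use assms in auto)
qed

lemma greater_if_deriv_neg:
  assumes "0 \<le> x" "x < y" "\<And>s. x < s \<Longrightarrow> s < y \<Longrightarrow> mu' s < 0"
  shows "mu x > mu y"
proof (rule DERIV_neg_imp_decreasing_open[OF assms(2)])
  show "\<exists>z. DERIV mu s :> z \<and> z < 0" if "x < s" "s < y" for s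
    using that assms has_deriv_at[of s] by auto
  show "continuous_on {x..y} mu"
    by (rule continuous_on_subset[OF continuous_on_nonneg]) (use assms in auto)
qed

end

locale monotone_growth = growth_rate +
  fixes m :: real
  assumes tendsto_limit: "(mu \<longlongrightarrow> m) at_top"
    and deriv_pos: "\<And>s. 0 < s \<Longrightarrow> mu' s > 0"
begin

lemma strict_mono: "strict_mono_on {0..} mu"
  by (rule strict_mono_onI, rule less_if_deriv_pos) (auto intro!: deriv_pos)

lemma less_limit:
  assumes "0 \<le> s"
  shows "mu s < m"
proof -
  have "mu (s + 1) \<le> m"
  proof (rule tendsto_lowerbound[OF tendsto_limit])
    show "\<forall>\<^sub>F x in at_top. mu (s + 1) \<le> mu x"
      using eventually_ge_at_top[of "s + 1"]
      by eventually_elim (use assms strict_mono_on_leD[OF strict_mono] in auto)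
  qed simp
  then show ?thesis using strict_mono_onD[OF strict_mono, of s "s + 1"] assms by simp
qed

lemma pos: "0 < s \<Longrightarrow> 0 < mu s"
  using strict_mono_onD[OF strict_mono, of 0 s] at_zero by simp

lemma nonneg: "0 \<le> s \<Longrightarrow> 0 \<le> mu s"
  using pos[of s] at_zero by (cases "s = 0") auto

lemma ex_level:
  assumes "0 < y" "y < m"
  shows "\<exists>s>0. mu s = y"
proof -
  obtain T where T: "\<And>x. T \<le> x \<Longrightarrow> y < mu x"
    using order_tendstoD(1)[OF tendsto_limit assms(2)] by (auto simp: eventually_at_top_linorder)
  have "\<exists>s. 0 \<le> s \<and> s \<le> max T 0 \<and> mu s = y"
    by (rule IVT')
      (use T[of "max T 0"] assms at_zero continuous_on_subset[OF continuous_on_nonneg] in auto)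
  then obtain s where "0 \<le> s" "mu s = y" by blast
  moreover have "s \<noteq> 0" using calculation assms at_zero by auto
  ultimately show ?thesis by (intro exI[of _ s]) auto
qed

end

locale nonmonotone_growth = growth_rate +
  fixes Sm :: real
  assumes tendsto_zero: "(mu \<longlongrightarrow> 0) at_top"
    and peak_pos: "0 < Sm"
    and deriv_pos: "\<And>s. 0 < s \<Longrightarrow> s < Sm \<Longrightarrow> mu' s > 0"
    and deriv_neg: "\<And>s. Sm < s \<Longrightarrow> mu' s < 0"
begin

lemma strict_mono_below_peak: "strict_mono_on {0..Sm} mu"
  by (rule strict_mono_onI, rule less_if_deriv_pos) (auto intro!: deriv_pos)

lemma strict_antimono_above_peak: "strict_antimono_on {Sm..} mu"
  by (rule monotone_onI, rule greater_if_deriv_neg) (use peak_pos in \<open>auto intro!: deriv_neg\<close>)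

lemma le_peak:
  assumes "0 \<le> s"
  shows "mu s \<le> mu Sm"
proof (cases "s \<le> Sm")
  case True
  then show ?thesis using strict_mono_on_leD[OF strict_mono_below_peak, of s Sm] assms by auto
next
  case False
  then show ?thesis using monotone_onD[OF strict_antimono_above_peak, of Sm s] by auto
qed

lemma ex_level_below_peak:
  assumes "0 < y" "y \<le> mu Sm"
  shows "\<exists>s>0. s \<le> Sm \<and> mu s = y"
proof -
  have "\<exists>s. 0 \<le> s \<and> s \<le> Sm \<and> mu s = y"
    by (rule IVT') (use assms at_zero peak_pos continuous_on_subset[OF continuous_on_nonneg] in auto)
  then obtain s where "0 \<le> s" "s \<le> Sm" "mu s = y" by blast
  moreover have "s \<noteq> 0" using calculation assms at_zero by auto
  ultimately show ?thesis by (intro exI[of _ s]) auto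
qed

lemma ex_level_above_peak:
  assumes "0 < y" "y \<le> mu Sm"
  shows "\<exists>s\<ge>Sm. mu s = y"
proof -
  obtain T where T: "\<And>x. T \<le> x \<Longrightarrow> mu x < y"
    using order_tendstoD(2)[OF tendsto_zero assms(1)] by (auto simp: eventually_at_top_linorder)
  have "\<exists>s. Sm \<le> s \<and> s \<le> max T Sm \<and> mu s = y"
    by (rule IVT2')
      (use T[of "max T Sm"] assms peak_pos continuous_on_subset[OF continuous_on_nonneg] in auto)
  then show ?thesis by blast
qed

end

locale chemostat =
  mu1: monotone_growth mu1 mu1' m1 + mu2: nonmonotone_growth mu2 mu2' S2m
  for mu1 mu1' m1 mu2 mu2' S2m +
  fixes k1 k2 k3 D r S1in S2in :: real
  assumes k_pos: "0 < k1" "0 < k2" "0 < k3"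
    and D_pos: "0 < D"
    and r_range: "0 < r" "r < 1"
    and Sin_nonneg: "0 \<le> S1in" "0 \<le> S2in"
begin

abbreviation "Dil i \<equiv> Dd D r i"
abbreviation "lambda1 i \<equiv> lam1 mu1 m1 D r i"
abbreviation "lambda2 i j \<equiv> lam2 mu2 S2m D r i j"
abbreviation "Fcrit i j \<equiv> FF k1 k2 D r S2in mu1 mu2 m1 S2m i j"
abbreviation "Phi j \<equiv> phi k1 k2 D r S1in S2in mu1 mu2 m1 S2m j"
abbreviation "X11 \<equiv> X11s k1 D r S1in mu1 m1"
abbreviation "X12 \<equiv> X12s k1 D r S1in mu1 m1"
abbreviation "is_steady a b c d \<equiv> steady k1 k2 k3 D r S1in S2in mu1 mu2 a b c d"
abbreviation "of_type t a b c d \<equiv> is_type k1 k2 k3 D r S1in S2in mu1 mu2 m1 S2m t a b c d"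
abbreviation "condition t \<equiv> exists_cond k1 k2 k3 D r S1in S2in mu1 mu2 m1 S2m t"

lemma rr_pos: "0 < rr r i"
  using r_range by (simp add: rr_def)

lemma dilution_pos: "0 < Dil i"
  using rr_pos D_pos by (simp add: Dd_def)

lemma lambda1_finite_iff: "lambda1 i \<noteq> \<infinity> \<longleftrightarrow> Dil i < m1"
  using rr_pos[of i] by (simp add: lam1_def Dd_def pos_divide_less_eq mult.commute)

lemma lambda2_finite_iff: "lambda2 i j \<noteq> \<infinity> \<longleftrightarrow> Dil i \<le> mu2 S2m"
  using rr_pos[of i] by (simp add: lam2_def Dd_def pos_divide_le_eq mult.commute)

lemma lambda1_eq:
  assumes "0 \<le> s" "mu1 s = Dil i"
  shows "lambda1 i = ereal s"
proof -
  have "lambda1 i \<noteq> \<infinity>"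
    using mu1.less_limit[OF assms(1)] assms(2) lambda1_finite_iff by simp
  moreover have "(THE s. 0 \<le> s \<and> mu1 s = Dil i) = s"
    using assms strict_mono_on_eqD[OF mu1.strict_mono] by (intro the_equality) auto
  ultimately show ?thesis by (auto simp: lam1_def split: if_splits)
qed

lemma lambda1_finiteE:
  assumes "lambda1 i \<noteq> \<infinity>"
  obtains L where "lambda1 i = ereal L" "0 < L" "mu1 L = Dil i"
proof -
  obtain L where "0 < L" "mu1 L = Dil i"
    using mu1.ex_level[OF dilution_pos] assms lambda1_finite_iff by blast
  with lambda1_eq show thesis by (intro that) auto
qed

lemma lambda1_level:
  assumes "lambda1 i = ereal s"
  shows "0 < s" "mu1 s = Dil i"
  using lambda1_finiteE[of i] assms by auto

lemma lambda2_eq_below_peak: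
  assumes "0 \<le> s" "s \<le> S2m" "mu2 s = Dil i"
  shows "lambda2 i 1 = ereal s"
proof -
  have "lambda2 i 1 \<noteq> \<infinity>"
    using mu2.le_peak[OF assms(1)] assms(3) lambda2_finite_iff by simp
  moreover have "(THE s. 0 \<le> s \<and> s \<le> S2m \<and> mu2 s = Dil i) = s"
    using assms strict_mono_on_eqD[OF mu2.strict_mono_below_peak] by (intro the_equality) auto
  ultimately show ?thesis by (auto simp: lam2_def split: if_splits)
qed

lemma lambda2_eq_above_peak:
  assumes "S2m \<le> s" "mu2 s = Dil i" "j \<noteq> 1"
  shows "lambda2 i j = ereal s"
proof -
  have "inj_on mu2 {S2m..}"
    using mu2.strict_antimono_above_peak strict_antimono_iff_antimono by blast
  then have "(THE s. S2m \<le> s \<and> mu2 s = Dil i) = s"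
    using assms by (intro the_equality) (auto simp: inj_on_def)
  moreover have "lambda2 i j \<noteq> \<infinity>"
    using mu2.le_peak[of s] mu2.peak_pos assms(1,2) lambda2_finite_iff by simp
  ultimately show ?thesis using assms(3) by (auto simp: lam2_def split: if_splits)
qed

lemma lambda2_eq:
  assumes "0 \<le> s" "mu2 s = Dil i"
  shows "\<exists>j\<in>{1,2}. lambda2 i j = ereal s"
  using lambda2_eq_below_peak[OF assms(1) _ assms(2)] lambda2_eq_above_peak[OF _ assms(2), of 2]
  by (cases "s \<le> S2m") auto

lemma lambda2_finiteE:
  assumes "lambda2 i j \<noteq> \<infinity>"
  obtains L where "lambda2 i j = ereal L" "0 < L" "mu2 L = Dil i"
proof -
  have level: "0 < Dil i" "Dil i \<le> mu2 S2m"
    using assms dilution_pos lambda2_finite_iff by auto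
  show thesis
  proof (cases "j = 1")
    case True
    obtain L where "0 < L" "L \<le> S2m" "mu2 L = Dil i"
      using mu2.ex_level_below_peak[OF level] by blast
    then show thesis using lambda2_eq_below_peak[of L i] True by (intro that[of L]) auto
  next
    case False
    obtain L where "S2m \<le> L" "mu2 L = Dil i"
      using mu2.ex_level_above_peak[OF level] by blast
    then show thesis
      using lambda2_eq_above_peak[of L i j] False mu2.peak_pos by (intro that[of L]) auto
  qed
qed

lemma ex1_second_tank_level:
  assumes "0 < a" "a < S1in / k1"
  shows "\<exists>!x. 0 < x \<and> x \<le> S1in / k1 \<and> mu1 (S1in - k1 * x) = Dil 2 * (x - a) / x"
proof (rule ex_ex1I)
  have "continuous_on {0..S1in / k1} (\<lambda>x. mu1 (S1in - k1 * x))"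
    by (rule continuous_on_compose2[OF mu1.continuous_on_nonneg continuous_on_diff])
      (use k_pos in \<open>auto intro: continuous_intros simp: pos_le_divide_eq mult.commute\<close>)
  from ex_root_against_dilution_term[OF this _ assms dilution_pos]
  show "\<exists>x. 0 < x \<and> x \<le> S1in / k1 \<and> mu1 (S1in - k1 * x) = Dil 2 * (x - a) / x"
    using k_pos mu1.at_zero by simp
next
  have no_two: False
    if "0 < x" "x < y" "y \<le> S1in / k1"
      "mu1 (S1in - k1 * x) = Dil 2 * (x - a) / x" "mu1 (S1in - k1 * y) = Dil 2 * (y - a) / y"
    for x y
  proof -
    have "k1 * y \<le> S1in" using that k_pos by (simp add: pos_le_divide_eq mult.commute)
    moreover have "k1 * x < k1 * y" using that k_pos by simp
    ultimately have "mu1 (S1in - k1 * y) < mu1 (S1in - k1 * x)"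
      by (intro strict_mono_onD[OF mu1.strict_mono]) auto
    moreover have "Dil 2 * (x - a) / x < Dil 2 * (y - a) / y"
      using dilution_term_strict_mono[OF dilution_pos assms(1) that(1,2)] .
    ultimately show False using that(4,5) by simp
  qed
  show "x = y"
    if "0 < x \<and> x \<le> S1in / k1 \<and> mu1 (S1in - k1 * x) = Dil 2 * (x - a) / x"
      "0 < y \<and> y \<le> S1in / k1 \<and> mu1 (S1in - k1 * y) = Dil 2 * (y - a) / y"
    for x y
    using no_two[of x y] no_two[of y x] that by (cases x y rule: linorder_cases) auto
qed

lemma X11_spec:
  assumes "lambda1 1 < ereal S1in"
  shows "lambda1 1 = ereal (S1in - k1 * X11)" "0 < X11" "X11 < S1in / k1"
proof -
  have "lambda1 1 \<noteq> \<infinity>" using assms by auto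
  then obtain L where L: "lambda1 1 = ereal L" "0 < L"
    using lambda1_finiteE by blast
  then have X11: "X11 = (S1in - L) / k1" by (simp add: X11s_def)
  have "L < S1in" using assms L by simp
  then show "lambda1 1 = ereal (S1in - k1 * X11)" "0 < X11" "X11 < S1in / k1"
    using L X11 k_pos by (simp_all add: divide_strict_right_mono)
qed

lemma X12_spec:
  assumes "lambda1 1 < ereal S1in"
  shows "0 < X12" "X12 \<le> S1in / k1" "mu1 (S1in - k1 * X12) = Dil 2 * (X12 - X11) / X12"
proof -
  have "0 < X12 \<and> X12 \<le> S1in / k1 \<and> mu1 (S1in - k1 * X12) = Dil 2 * (X12 - X11) / X12"
    unfolding X12s_def by (rule theI'[OF ex1_second_tank_level[OF X11_spec(2,3)[OF assms]]])
  then show "0 < X12" "X12 \<le> S1in / k1" "mu1 (S1in - k1 * X12) = Dil 2 * (X12 - X11) / X12"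
    by blast+
qed

lemma X12_unique:
  assumes "lambda1 1 < ereal S1in" "0 < x" "x \<le> S1in / k1"
    "mu1 (S1in - k1 * x) = Dil 2 * (x - X11) / x"
  shows "x = X12"
  unfolding X12s_def
  using the1_equality[OF ex1_second_tank_level[OF X11_spec(2,3)[OF assms(1)]]] assms(2-4) by simp

(* The second-tank equations are stated in the form f_1(c) = g_1(c) and f_3(d) = g_2(d). *)
definition first_species_steady :: "real \<Rightarrow> real \<Rightarrow> bool" where
  "first_species_steady a c \<longleftrightarrow>
     0 \<le> a \<and> a \<le> S1in / k1 \<and> 0 \<le> c \<and> c \<le> S1in / k1 \<and>
     (a = 0 \<or> mu1 (S1in - k1 * a) = Dil 1) \<and>
     (c = 0 \<and> a = 0 \<or> c \<noteq> 0 \<and> mu1 (S1in - k1 * c) = Dil 2 * (c - a) / c)"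

definition second_species_steady :: "real \<Rightarrow> real \<Rightarrow> real \<Rightarrow> real \<Rightarrow> bool" where
  "second_species_steady a c b d \<longleftrightarrow>
     0 \<le> b \<and> b \<le> (S2in + k2 * a) / k3 \<and> 0 \<le> d \<and> d \<le> (S2in + k2 * c) / k3 \<and>
     (b = 0 \<or> mu2 (S2in + k2 * a - k3 * b) = Dil 1) \<and>
     (d = 0 \<and> b = 0 \<or> d \<noteq> 0 \<and> mu2 (S2in + k2 * c - k3 * d) = Dil 2 * (d - b) / d)"

lemma steady_iff_species:
  "is_steady a b c d \<longleftrightarrow> first_species_steady a c \<and> second_species_steady a c b d"
  unfolding steady_def inM_def first_species_steady_def second_species_steady_def
    balance_eq_zero_iff[OF dilution_pos] mult_eq_0_iff right_minus_eq
  by blast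

lemma first_species_cases:
  assumes "first_species_steady a c"
  obtains (washout) "a = 0" "c = 0"
  | (second_tank) "a = 0" "0 < c" "lambda1 2 = ereal (S1in - k1 * c)"
  | (both_tanks) "0 < a" "lambda1 1 < ereal S1in" "a = X11" "c = X12"
proof -
  note fs = assms[unfolded first_species_steady_def]
  have arg_nonneg: "0 \<le> S1in - k1 * x" if "x \<le> S1in / k1" for x
    using that k_pos by (simp add: pos_le_divide_eq mult.commute)
  consider "a = 0" "c = 0" | "a = 0" "c \<noteq> 0" | "a \<noteq> 0" by blast
  then show thesis
  proof cases
    case 1
    then show thesis by (rule washout)
  next
    case 2
    then have "lambda1 2 = ereal (S1in - k1 * c)"
      using fs arg_nonneg by (intro lambda1_eq) auto
    with 2 fs show thesis by (intro second_tank) auto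
  next
    case 3
    then have lam: "lambda1 1 = ereal (S1in - k1 * a)"
      using fs arg_nonneg by (intro lambda1_eq) auto
    moreover have "0 < a" using 3 fs by auto
    ultimately have below: "lambda1 1 < ereal S1in" using k_pos by simp
    have "a = X11" using lam k_pos by (simp add: X11s_def)
    moreover have "c = X12" using 3 fs \<open>a = X11\<close> by (intro X12_unique[OF below]) auto
    ultimately show thesis using \<open>0 < a\<close> below by (intro both_tanks)
  qed
qed

lemma second_species_cases:
  assumes "second_species_steady a c b d"
  obtains (washout) "b = 0" "d = 0"
  | (second_tank) j where "j \<in> {1, 2}" "b = 0" "0 < d"
      "lambda2 2 j = ereal (S2in + k2 * c - k3 * d)"
  | (both_tanks) j where "j \<in> {1, 2}" "0 < b" "0 < d"
      "lambda2 1 j = ereal (S2in + k2 * a - k3 * b)"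
proof -
  note ss = assms[unfolded second_species_steady_def]
  have arg_nonneg: "0 \<le> S2in + k2 * x - k3 * y" if "y \<le> (S2in + k2 * x) / k3" for x y
    using that k_pos by (simp add: pos_le_divide_eq mult.commute)
  consider "b = 0" "d = 0" | "b = 0" "d \<noteq> 0" | "b \<noteq> 0" by blast
  then show thesis
  proof cases
    case 1
    then show thesis by (rule washout)
  next
    case 2
    then have "mu2 (S2in + k2 * c - k3 * d) = Dil 2" using ss by simp
    then obtain j where "j \<in> {1, 2}" "lambda2 2 j = ereal (S2in + k2 * c - k3 * d)"
      using lambda2_eq arg_nonneg ss by blast
    with 2 ss show thesis by (intro second_tank) auto
  next
    case 3
    then have "mu2 (S2in + k2 * a - k3 * b) = Dil 1" using ss by simp
    then obtain j where "j \<in> {1, 2}" "lambda2 1 j = ereal (S2in + k2 * a - k3 * b)"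
      using lambda2_eq arg_nonneg ss by blast
    with 3 ss show thesis by (intro both_tanks) auto
  qed
qed

lemma first_species_second_tank_exists:
  assumes "lambda1 2 < ereal S1in"
  obtains c where "first_species_steady 0 c" "0 < c" "lambda1 2 = ereal (S1in - k1 * c)"
proof -
  have "lambda1 2 \<noteq> \<infinity>" using assms by auto
  then obtain L where L: "lambda1 2 = ereal L" "0 < L" "mu1 L = Dil 2"
    by (rule lambda1_finiteE)
  define c where "c = (S1in - L) / k1"
  have "L < S1in" using assms L by simp
  then have "0 < c" "c \<le> S1in / k1" "S1in - k1 * c = L"
    using L k_pos by (simp_all add: c_def divide_right_mono)
  with L show thesis by (intro that[of c]) (simp_all add: first_species_steady_def)
qed

lemma first_species_both_tanks:
  assumes "lambda1 1 < ereal S1in"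
  shows "first_species_steady X11 X12" "X11 \<le> X12"
proof -
  note X11 = X11_spec[OF assms] and X12 = X12_spec[OF assms]
  have "0 \<le> mu1 (S1in - k1 * X12)"
    using X12(2) k_pos by (intro mu1.nonneg) (simp add: pos_le_divide_eq mult.commute)
  then show "X11 \<le> X12"
    using X12(1,3) dilution_pos[of 2] by (simp add: zero_le_divide_iff zero_le_mult_iff)
  show "first_species_steady X11 X12"
    using X11 X12 lambda1_level(2)[OF X11(1)] by (simp add: first_species_steady_def)
qed

lemma second_species_washout: "0 \<le> a \<Longrightarrow> 0 \<le> c \<Longrightarrow> second_species_steady a c 0 0"
  using k_pos Sin_nonneg by (simp add: second_species_steady_def)

lemma second_species_second_tank_exists:
  assumes "0 \<le> a" "0 \<le> c" "lambda2 2 j < ereal (S2in + k2 * c)"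
  obtains d where "second_species_steady a c 0 d" "0 < d"
    "lambda2 2 j = ereal (S2in + k2 * c - k3 * d)"
proof -
  have "lambda2 2 j \<noteq> \<infinity>" using assms by auto
  then obtain L where L: "lambda2 2 j = ereal L" "0 < L" "mu2 L = Dil 2"
    by (rule lambda2_finiteE)
  define d where "d = (S2in + k2 * c - L) / k3"
  have "L < S2in + k2 * c" using assms L by simp
  then have "0 < d" "d \<le> (S2in + k2 * c) / k3" "S2in + k2 * c - k3 * d = L"
    using L k_pos by (simp_all add: d_def divide_right_mono)
  with L assms(1) k_pos Sin_nonneg show thesis
    by (intro that[of d]) (simp_all add: second_species_steady_def)
qed

lemma second_species_both_tanks_exists:
  assumes "0 \<le> a" "a \<le> c" "lambda2 1 j < ereal (S2in + k2 * a)"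
  obtains b d where "second_species_steady a c b d" "0 < b" "0 < d"
    "lambda2 1 j = ereal (S2in + k2 * a - k3 * b)"
proof -
  have "lambda2 1 j \<noteq> \<infinity>" using assms by auto
  then obtain L where L: "lambda2 1 j = ereal L" "0 < L" "mu2 L = Dil 1"
    by (rule lambda2_finiteE)
  define b where "b = (S2in + k2 * a - L) / k3"
  have "L < S2in + k2 * a" using assms L by simp
  then have b: "0 < b" "b \<le> (S2in + k2 * a) / k3" "S2in + k2 * a - k3 * b = L"
    using L k_pos by (simp_all add: b_def divide_right_mono)
  have "b < (S2in + k2 * a) / k3" using L k_pos by (simp add: b_def divide_strict_right_mono)
  also have "\<dots> \<le> (S2in + k2 * c) / k3" using assms k_pos by (simp add: divide_right_mono)
  finally have b_below: "b < (S2in + k2 * c) / k3" .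
  have "continuous_on {0..(S2in + k2 * c) / k3} (\<lambda>x. mu2 (S2in + k2 * c - k3 * x))"
    by (rule continuous_on_compose2[OF mu2.continuous_on_nonneg continuous_on_diff])
      (use k_pos in \<open>auto intro: continuous_intros simp: pos_le_divide_eq mult.commute\<close>)
  moreover have "mu2 (S2in + k2 * c - k3 * ((S2in + k2 * c) / k3)) = 0"
    using k_pos mu2.at_zero by simp
  ultimately obtain d where d: "0 < d" "d \<le> (S2in + k2 * c) / k3"
    "mu2 (S2in + k2 * c - k3 * d) = Dil 2 * (d - b) / d"
    using ex_root_against_dilution_term[OF _ _ b(1) b_below dilution_pos] by blast
  with b L show thesis
    by (intro that[of b d]) (simp_all add: second_species_steady_def)
qed

lemma Fcrit_level:
  assumes "lambda1 i = ereal (S1in - k1 * x)" "lambda2 i j = ereal (S2in + k2 * x - k3 * y)"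
  shows "Fcrit i j = ereal (S1in - k1 * k3 / k2 * y)"
  using assms k_pos by (simp add: FF_def field_simps)

lemma Fcrit_less_iff:
  assumes "lambda1 i = ereal (S1in - k1 * x)"
  shows "Fcrit i j < ereal S1in \<longleftrightarrow> lambda2 i j < ereal (S2in + k2 * x)"
proof (cases "lambda2 i j = \<infinity>")
  case True
  then show ?thesis using assms k_pos by (simp add: FF_def)
next
  case False
  then obtain L where L: "lambda2 i j = ereal L" by (rule lambda2_finiteE)
  have "k1 / k2 * (L - S2in) < k1 * x \<longleftrightarrow> (L - S2in) / k2 < x"
    using mult_less_cancel_left_pos[OF k_pos(1), of "(L - S2in) / k2" x] by simp
  also have "\<dots> \<longleftrightarrow> L < S2in + k2 * x"
    using k_pos by (auto simp: pos_divide_less_eq mult.commute)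
  finally show ?thesis using assms L by (simp add: FF_def)
qed

lemma Phi_pos_iff: "0 < Phi j \<longleftrightarrow> lambda2 2 j < ereal (S2in + k2 * X12)"
proof (cases "lambda2 2 j = \<infinity>")
  case False
  then obtain L where "lambda2 2 j = ereal L" by (rule lambda2_finiteE)
  then show ?thesis by (simp add: phi_def)
qed (simp add: phi_def)

lemma has_type_first_species_washout:
  assumes "second_species_steady 0 0 b d"
  shows "\<exists>t\<in>all_types. of_type t 0 b 0 d"
  using assms
proof (cases rule: second_species_cases)
  case washout
  then show ?thesis by (intro bexI[of _ E00_00]) (simp_all add: all_types_def)
next
  case (second_tank j)
  then show ?thesis using k_pos by (intro bexI[of _ "E00_0i j"]) (auto simp: all_types_def)
next
  case (both_tanks j)
  then show ?thesis using assms k_pos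
    by (intro bexI[of _ "E0i_01 j"]) (auto simp: all_types_def second_species_steady_def)
qed

lemma has_type_first_species_second_tank:
  assumes "0 < c" "lambda1 2 = ereal (S1in - k1 * c)" "second_species_steady 0 c b d"
  shows "\<exists>t\<in>all_types. of_type t 0 b c d"
  using assms(3)
proof (cases rule: second_species_cases)
  case washout
  then show ?thesis using assms k_pos by (intro bexI[of _ E00_10]) (auto simp: all_types_def)
next
  case (second_tank j)
  then show ?thesis using assms k_pos Fcrit_level[OF assms(2), of j d]
    by (intro bexI[of _ "E00_1i j"]) (auto simp: all_types_def)
next
  case (both_tanks j)
  then show ?thesis using assms k_pos
    by (intro bexI[of _ "E0i_11 j"]) (auto simp: all_types_def second_species_steady_def)
qed

lemma has_type_first_species_both_tanks:
  assumes "lambda1 1 < ereal S1in" "second_species_steady X11 X12 b d"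
  shows "\<exists>t\<in>all_types. of_type t X11 b X12 d"
proof -
  note X11 = X11_spec[OF assms(1)] and X12 = X12_spec[OF assms(1)]
  from assms(2) show ?thesis
  proof (cases rule: second_species_cases)
    case washout
    then show ?thesis using assms X11 X12 by (intro bexI[of _ E10_10]) (auto simp: all_types_def)
  next
    case (second_tank j)
    then show ?thesis using assms X11 X12 k_pos
      by (intro bexI[of _ "E10_1i j"]) (auto simp: all_types_def phi_def)
  next
    case (both_tanks j)
    then show ?thesis using assms X11 X12 k_pos Fcrit_level[OF X11(1), of j b]
      by (intro bexI[of _ "E1i_11 j"]) (auto simp: all_types_def second_species_steady_def)
  qed
qed

lemma steady_has_type:
  assumes "is_steady a b c d"
  shows "\<exists>t\<in>all_types. of_type t a b c d"
proof -
  from assms have "first_species_steady a c" and ss: "second_species_steady a c b d"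
    by (simp_all add: steady_iff_species)
  then show ?thesis
  proof (cases rule: first_species_cases)
    case washout
    with ss show ?thesis by (simp add: has_type_first_species_washout)
  next
    case second_tank
    with ss show ?thesis by (simp add: has_type_first_species_second_tank)
  next
    case both_tanks
    with ss show ?thesis by (simp add: has_type_first_species_both_tanks)
  qed
qed

abbreviation "realizable t \<equiv> \<exists>a b c d. is_steady a b c d \<and> of_type t a b c d"

lemma realizable_first_species_washout:
  shows "realizable E00_00"
    and "lambda2 2 j < ereal S2in \<Longrightarrow> realizable (E00_0i j)"
    and "lambda2 1 j < ereal S2in \<Longrightarrow> realizable (E0i_01 j)"
proof -
  have fs: "first_species_steady 0 0" using k_pos Sin_nonneg by (simp add: first_species_steady_def)
  show "realizable E00_00"
    using fs second_species_washout by (auto simp: steady_iff_species)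
  show "realizable (E00_0i j)" if below: "lambda2 2 j < ereal S2in"
  proof -
    obtain d where "second_species_steady 0 0 0 d" "0 < d"
        "lambda2 2 j = ereal (S2in + k2 * 0 - k3 * d)"
      by (rule second_species_second_tank_exists[of 0 0 j]) (use below in simp_all)
    with fs k_pos have "is_steady 0 0 0 d" "of_type (E00_0i j) 0 0 0 d"
      by (simp_all add: steady_iff_species)
    then show ?thesis by blast
  qed
  show "realizable (E0i_01 j)" if below: "lambda2 1 j < ereal S2in"
  proof -
    obtain b d where "second_species_steady 0 0 b d" "0 < b" "0 < d"
        "lambda2 1 j = ereal (S2in + k2 * 0 - k3 * b)"
      by (rule second_species_both_tanks_exists[of 0 0 j]) (use below in simp_all)
    with fs k_pos have "is_steady 0 b 0 d" "of_type (E0i_01 j) 0 b 0 d"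
      by (auto simp: steady_iff_species second_species_steady_def)
    then show ?thesis by blast
  qed
qed

lemma realizable_first_species_second_tank:
  assumes "lambda1 2 < ereal S1in"
  shows "realizable E00_10"
    and "Fcrit 2 j < ereal S1in \<Longrightarrow> realizable (E00_1i j)"
    and "lambda2 1 j < ereal S2in \<Longrightarrow> realizable (E0i_11 j)"
proof -
  obtain c where fs: "first_species_steady 0 c" and c: "0 < c" "lambda1 2 = ereal (S1in - k1 * c)"
    using first_species_second_tank_exists[OF assms] by blast
  show "realizable E00_10"
  proof -
    have "is_steady 0 0 c 0" "of_type E00_10 0 0 c 0"
      using fs c k_pos second_species_washout[of 0 c] by (simp_all add: steady_iff_species)
    then show ?thesis by blast
  qed
  show "realizable (E00_1i j)" if below: "Fcrit 2 j < ereal S1in"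
  proof -
    obtain d where "second_species_steady 0 c 0 d" "0 < d"
        "lambda2 2 j = ereal (S2in + k2 * c - k3 * d)"
      by (rule second_species_second_tank_exists[of 0 c j])
        (use below c Fcrit_less_iff[OF c(2)] in simp_all)
    with fs c k_pos Fcrit_level[OF c(2), of j d]
    have "is_steady 0 0 c d" "of_type (E00_1i j) 0 0 c d"
      by (simp_all add: steady_iff_species)
    then show ?thesis by blast
  qed
  show "realizable (E0i_11 j)" if below: "lambda2 1 j < ereal S2in"
  proof -
    obtain b d where "second_species_steady 0 c b d" "0 < b" "0 < d"
        "lambda2 1 j = ereal (S2in + k2 * 0 - k3 * b)"
      by (rule second_species_both_tanks_exists[of 0 c j]) (use below c in simp_all)
    with fs c k_pos have "is_steady 0 b c d" "of_type (E0i_11 j) 0 b c d"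
      by (auto simp: steady_iff_species second_species_steady_def)
    then show ?thesis by blast
  qed
qed

lemma realizable_first_species_both_tanks:
  assumes "lambda1 1 < ereal S1in"
  shows "realizable E10_10"
    and "0 < Phi j \<Longrightarrow> realizable (E10_1i j)"
    and "Fcrit 1 j < ereal S1in \<Longrightarrow> realizable (E1i_11 j)"
proof -
  note X11 = X11_spec[OF assms] and X12 = X12_spec[OF assms]
  note fs = first_species_both_tanks[OF assms]
  show "realizable E10_10"
  proof -
    have "is_steady X11 0 X12 0" "of_type E10_10 X11 0 X12 0"
      using fs X11 X12 second_species_washout[of X11 X12] by (simp_all add: steady_iff_species)
    then show ?thesis by blast
  qed
  show "realizable (E10_1i j)" if pos: "0 < Phi j"
  proof -
    obtain d where "second_species_steady X11 X12 0 d" "0 < d"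
        "lambda2 2 j = ereal (S2in + k2 * X12 - k3 * d)"
      by (rule second_species_second_tank_exists[of X11 X12 j])
        (use pos X11 X12 Phi_pos_iff in simp_all)
    with fs X11 X12 k_pos have "is_steady X11 0 X12 d" "of_type (E10_1i j) X11 0 X12 d"
      by (simp_all add: steady_iff_species phi_def)
    then show ?thesis by blast
  qed
  show "realizable (E1i_11 j)" if below: "Fcrit 1 j < ereal S1in"
  proof -
    obtain b d where "second_species_steady X11 X12 b d" "0 < b" "0 < d"
        "lambda2 1 j = ereal (S2in + k2 * X11 - k3 * b)"
      by (rule second_species_both_tanks_exists[of X11 X12 j])
        (use below X11 fs Fcrit_less_iff[OF X11(1)] in simp_all)
    with fs X11 X12 k_pos Fcrit_level[OF X11(1), of j b]
    have "is_steady X11 b X12 d" "of_type (E1i_11 j) X11 b X12 d"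
      by (auto simp: steady_iff_species second_species_steady_def)
    then show ?thesis by blast
  qed
qed

lemma condition_imp_realizable: "condition t \<Longrightarrow> realizable t"
  by (cases t) (simp_all del: is_type.simps add: realizable_first_species_washout
    realizable_first_species_second_tank realizable_first_species_both_tanks)

lemma of_type_imp_condition: "of_type t a b c d \<Longrightarrow> condition t"
  using k_pos
  by (cases t) (auto simp: X11s_def zero_less_divide_iff zero_less_mult_iff mult_less_0_iff
    zero_less_real_of_ereal intro!: ereal_less_if_real_of_ereal_less)

end

theorem proposition3p1:
  fixes k1 k2 k3 D r S1in S2in m1 S2m :: real
    and mu1 mu2 mu1' mu2' :: "real \<Rightarrow> real"
  assumes k_pos: "k1 > 0" "k2 > 0" "k3 > 0"
    and D_pos: "D > 0"
    and r_range: "0 < r" "r < 1"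
    and Sin_nonneg: "S1in \<ge> 0" "S2in \<ge> 0"
    and mu1_C1: "\<And>s. s \<ge> 0 \<Longrightarrow> (mu1 has_real_derivative mu1' s) (at s within {0..})"
                "continuous_on {0..} mu1'"
    and mu2_C1: "\<And>s. s \<ge> 0 \<Longrightarrow> (mu2 has_real_derivative mu2' s) (at s within {0..})"
                "continuous_on {0..} mu2'"
    and H1: "mu1 0 = 0" "(mu1 \<longlongrightarrow> m1) at_top" "\<And>s. s > 0 \<Longrightarrow> mu1' s > 0"
    and H2: "mu2 0 = 0" "(mu2 \<longlongrightarrow> 0) at_top" "S2m > 0"
            "\<And>s. 0 < s \<Longrightarrow> s < S2m \<Longrightarrow> mu2' s > 0"
            "\<And>s. S2m < s \<Longrightarrow> mu2' s < 0"
  shows "(\<forall>a b c d. steady k1 k2 k3 D r S1in S2in mu1 mu2 a b c d \<longrightarrow>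
            (\<exists>t\<in>all_types. is_type k1 k2 k3 D r S1in S2in mu1 mu2 m1 S2m t a b c d))
       \<and> (\<forall>t\<in>all_types.
            (\<exists>a b c d. steady k1 k2 k3 D r S1in S2in mu1 mu2 a b c d \<and>
                       is_type k1 k2 k3 D r S1in S2in mu1 mu2 m1 S2m t a b c d)
            \<longleftrightarrow> exists_cond k1 k2 k3 D r S1in S2in mu1 mu2 m1 S2m t)"
proof -
  interpret chemostat mu1 mu1' m1 mu2 mu2' S2m k1 k2 k3 D r S1in S2in
    by unfold_locales (use assms in auto)
  show ?thesis
    using steady_has_type of_type_imp_condition condition_imp_realizable by blast
qed

end
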